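(* For all positive integers $N$ and $k$, $c_{kN}\ge c_N$.
   Context: $\mathbb{T}$ is the unit circle with normalized Lebesgue measure and $\hat f(n)=\frac{1}{2\pi}\int_0^{2\pi} f(e^{i\theta})e^{-in\theta}\,d\theta$. For a positive integer $M$, $\mathcal{T}_{M+1}$ is the class of $(M+1)\times(M+1)$ complex self-adjoint Toeplitz matrices $A=(a_{j-l})_{j,l=0}^M$, viewed as operators on $\mathbb{C}^{M+1}$ (equivalently on the space of polynomials of degree at most $M$ in $L^2(\mathbb{T})$ with monomial basis) with operator norm $\|A\|$. For such $A$, $\mathcal{G}_A$ is the set of $f\in L^\infty(\mathbb{T})$ with $\hat f(n)=a_n$ for $|n|\le M$, and $c_A=\min\{\|f\|_\infty: f\in\mathcal{G}_A\}$. Then $c_M=\max\{c_A/\|A\|: A\in\mathcal{T}_{M+1},\ A\neq 0\}$ (the maximum is attained). *)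

theory Defs
  imports "HOL-Analysis.Analysis" "HOL-Probability.Essential_Supremum"
begin

text \<open>Functions on the unit circle are parametrized by the angle theta in [0, 2 pi];
  the measure is Lebesgue measure on [0, 2 pi] (normalization is irrelevant for the
  essential supremum, and the Fourier coefficient carries the factor 1/(2 pi)).\<close>

abbreviation circ_measure :: "real measure" where
  "circ_measure \<equiv> lebesgue_on {0..2*pi}"

definition fourier_coeff :: "(real \<Rightarrow> complex) \<Rightarrow> int \<Rightarrow> complex" where
  "fourier_coeff f n =
     (1 / (2*pi)) * (\<integral>\<theta>. f \<theta> * exp (- (\<i> * of_int n * of_real \<theta>)) \<partial>circ_measure)"

definition Linf_norm :: "(real \<Rightarrow> complex) \<Rightarrow> ereal" where
  "Linf_norm f = esssup circ_measure (\<lambda>\<theta>. ereal (cmod (f \<theta>)))"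

definition Linf :: "(real \<Rightarrow> complex) set" where
  "Linf = {f. f \<in> borel_measurable circ_measure \<and> Linf_norm f < \<infinity>}"

text \<open>A self-adjoint Toeplitz matrix A = (a_(j-l))_(j,l=0..M) is given by its symbol
  a :: int => complex on {-M..M} with a(-n) = conj (a n).\<close>
definition selfadj_toeplitz :: "nat \<Rightarrow> (int \<Rightarrow> complex) \<Rightarrow> bool" where
  "selfadj_toeplitz M a \<longleftrightarrow> (\<forall>n. \<bar>n\<bar> \<le> int M \<longrightarrow> a (-n) = cnj (a n))"

definition toeplitz_nonzero :: "nat \<Rightarrow> (int \<Rightarrow> complex) \<Rightarrow> bool" where
  "toeplitz_nonzero M a \<longleftrightarrow> (\<exists>n. \<bar>n\<bar> \<le> int M \<and> a n \<noteq> 0)"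

definition toeplitz_opnorm :: "nat \<Rightarrow> (int \<Rightarrow> complex) \<Rightarrow> real" where
  "toeplitz_opnorm M a = Sup {sqrt (\<Sum>j\<le>M. (cmod (\<Sum>l\<le>M. a (int j - int l) * v l))\<^sup>2) | v.
       (\<Sum>l\<le>M. (cmod (v l))\<^sup>2) \<le> 1}"

definition G_set :: "nat \<Rightarrow> (int \<Rightarrow> complex) \<Rightarrow> (real \<Rightarrow> complex) set" where
  "G_set M a = {f \<in> Linf. \<forall>n. \<bar>n\<bar> \<le> int M \<longrightarrow> fourier_coeff f n = a n}"

text \<open>c_A = min of the L-infinity norms over G_A (the paper shows the minimum is attained,
  so it equals the infimum).\<close>
definition c_A :: "nat \<Rightarrow> (int \<Rightarrow> complex) \<Rightarrow> ereal" where
  "c_A M a = (INF f \<in> G_set M a. Linf_norm f)"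

text \<open>c_M = max of c_A / ||A|| over nonzero self-adjoint Toeplitz A (attained, so = Sup).\<close>
definition c_const :: "nat \<Rightarrow> ereal" where
  "c_const M = (SUP a \<in> {a. selfadj_toeplitz M a \<and> toeplitz_nonzero M a}.
                   c_A M a / ereal (toeplitz_opnorm M a))"

end

theory Submission
  imports Defs
begin

text \<open>Dilating the symbol of \<open>A\<close> by \<open>k\<close> (moving \<open>a n\<close> to position \<open>k n\<close>, zeros elsewhere) does
  not increase the operator norm: after sorting coordinates by their residue mod \<open>k\<close>, the dilated
  matrix acts on each residue class as a compression of \<open>A\<close>. Conversely, if a bounded \<open>g\<close> has the
  dilated symbol as Fourier coefficients, then the mean \<open>f\<close> of \<open>g\<close> over \<open>k\<close>-th roots,
  \<open>f z = (1/k) \<Sum>{g w | w\<^sup>k = z}\<close>, satisfies \<open>fourier_coeff f n = fourier_coeff g (k n) = a n\<close> and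
  has no larger sup norm. Hence \<open>c\<^sub>A / \<parallel>A\<parallel>\<close> can only grow when \<open>A\<close> is replaced by its dilation.\<close>

definition toeplitz_mult :: "nat \<Rightarrow> (int \<Rightarrow> complex) \<Rightarrow> (nat \<Rightarrow> complex) \<Rightarrow> nat \<Rightarrow> complex" where
  "toeplitz_mult M a v j = (\<Sum>l\<le>M. a (int j - int l) * v l)"

definition sqnorm :: "nat \<Rightarrow> (nat \<Rightarrow> complex) \<Rightarrow> real" where
  "sqnorm M v = (\<Sum>l\<le>M. (cmod (v l))\<^sup>2)"

lemma toeplitz_opnorm_eq:
  "toeplitz_opnorm M a = Sup {sqrt (sqnorm M (toeplitz_mult M a v)) | v. sqnorm M v \<le> 1}"
  by (simp add: toeplitz_opnorm_def toeplitz_mult_def sqnorm_def)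

lemma sqnorm_nonneg: "sqnorm M v \<ge> 0"
  by (simp add: sqnorm_def sum_nonneg)

lemma bdd_above_toeplitz_mult_image:
  "bdd_above {sqrt (sqnorm M (toeplitz_mult M a v)) | v. sqnorm M v \<le> 1}"
proof -
  define C where "C = (\<Sum>j\<le>M. (\<Sum>l\<le>M. cmod (a (int j - int l)))\<^sup>2)"
  have "sqrt (sqnorm M (toeplitz_mult M a v)) \<le> sqrt C" if v: "sqnorm M v \<le> 1" for v
  proof -
    have v_le_1: "cmod (v l) \<le> 1" if "l \<le> M" for l
    proof (rule power2_le_imp_le)
      show "(cmod (v l))\<^sup>2 \<le> 1\<^sup>2"
        using member_le_sum[of l "{..M}" "\<lambda>l. (cmod (v l))\<^sup>2"] that v by (simp add: sqnorm_def)
    qed simp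
    have "cmod (toeplitz_mult M a v j) \<le> (\<Sum>l\<le>M. cmod (a (int j - int l)))" for j
    proof -
      have "cmod (toeplitz_mult M a v j) \<le> (\<Sum>l\<le>M. cmod (a (int j - int l)) * cmod (v l))"
        using norm_sum[of "\<lambda>l. a (int j - int l) * v l" "{..M}"]
        by (simp add: toeplitz_mult_def norm_mult)
      also have "\<dots> \<le> (\<Sum>l\<le>M. cmod (a (int j - int l)))"
        by (intro sum_mono) (auto intro: mult_left_le v_le_1)
      finally show ?thesis .
    qed
    then have "sqnorm M (toeplitz_mult M a v) \<le> C"
      unfolding sqnorm_def C_def by (intro sum_mono power_mono) auto
    then show ?thesis by simp
  qed
  then show ?thesis
    by (intro bdd_aboveI[where M="sqrt C"]) blast
qed

lemma toeplitz_mult_le_opnorm: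
  assumes "sqnorm M v \<le> 1"
  shows "sqrt (sqnorm M (toeplitz_mult M a v)) \<le> toeplitz_opnorm M a"
  unfolding toeplitz_opnorm_eq using assms
  by (intro cSup_upper[OF _ bdd_above_toeplitz_mult_image]) blast

lemma toeplitz_opnorm_nonneg: "toeplitz_opnorm M a \<ge> 0"
  using toeplitz_mult_le_opnorm[of M "\<lambda>_. 0" a]
  by (simp add: sqnorm_def toeplitz_mult_def)

lemma sqnorm_toeplitz_mult_le:
  "sqnorm M (toeplitz_mult M a w) \<le> (toeplitz_opnorm M a)\<^sup>2 * sqnorm M w"
proof (cases "sqnorm M w = 0")
  case True
  then have "w l = 0" if "l \<le> M" for l
    using that sum_nonneg_eq_0_iff[of "{..M}" "\<lambda>l. (cmod (w l))\<^sup>2"] by (simp add: sqnorm_def)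
  then have "sqnorm M (toeplitz_mult M a w) = 0"
    by (simp add: toeplitz_mult_def sqnorm_def)
  with True show ?thesis by simp
next
  case False
  define s where "s = sqrt (sqnorm M w)"
  have s: "s > 0" using False sqnorm_nonneg[of M w] by (simp add: s_def)
  define v where "v l = w l / of_real s" for l
  have "sqnorm M v = sqnorm M w / s\<^sup>2"
    by (simp add: sqnorm_def v_def norm_divide power_divide sum_divide_distrib)
  then have "sqnorm M v = 1" using s sqnorm_nonneg[of M w] by (simp add: s_def)
  then have "sqrt (sqnorm M (toeplitz_mult M a v)) \<le> toeplitz_opnorm M a"
    by (intro toeplitz_mult_le_opnorm) simp
  moreover have "toeplitz_mult M a v j = toeplitz_mult M a w j / of_real s" for j
    by (simp add: toeplitz_mult_def v_def sum_divide_distrib)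
  then have "sqnorm M (toeplitz_mult M a v) = sqnorm M (toeplitz_mult M a w) / s\<^sup>2"
    by (simp add: sqnorm_def norm_divide power_divide sum_divide_distrib)
  ultimately have "sqrt (sqnorm M (toeplitz_mult M a w)) \<le> toeplitz_opnorm M a * s"
    using s by (simp add: real_sqrt_divide divide_le_eq)
  then have "(sqrt (sqnorm M (toeplitz_mult M a w)))\<^sup>2 \<le> (toeplitz_opnorm M a * s)\<^sup>2"
    by (intro power_mono) (simp_all add: sqnorm_nonneg)
  then show ?thesis
    using s sqnorm_nonneg[of M w] sqnorm_nonneg[of M "toeplitz_mult M a w"]
    by (simp add: s_def power_mult_distrib)
qed

definition dilate_symbol :: "nat \<Rightarrow> (int \<Rightarrow> complex) \<Rightarrow> int \<Rightarrow> complex" where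
  "dilate_symbol k a n = (if int k dvd n then a (n div int k) else 0)"

lemma dilate_symbol_mult [simp]: "k > 0 \<Longrightarrow> dilate_symbol k a (int k * n) = a n"
  by (simp add: dilate_symbol_def)

lemma dilate_symbol_residues:
  assumes "r < k" "s < k"
  shows "dilate_symbol k a (int (k*q + r) - int (k*p + s)) = (if s = r then a (int q - int p) else 0)"
proof -
  have eq: "int (k*q + r) - int (k*p + s) = int k * (int q - int p) + (int r - int s)"
    by (simp add: algebra_simps)
  show ?thesis
  proof (cases "s = r")
    case True
    then show ?thesis using assms unfolding eq by (simp add: dilate_symbol_def)
  next
    case False
    then have "\<not> int k dvd int r - int s"
      using dvd_imp_le_int[of "int r - int s" "int k"] assms by auto
    then have "\<not> int k dvd int k * (int q - int p) + (int r - int s)"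
      by (simp add: dvd_add_right_iff)
    then show ?thesis using False unfolding eq by (simp add: dilate_symbol_def)
  qed
qed

lemma sum_atMost_mult_by_residue:
  fixes F :: "nat \<Rightarrow> 'b::comm_monoid_add"
  assumes "k > 0"
  shows "(\<Sum>j\<le>k*N. F j) = (\<Sum>r<k. \<Sum>q\<le>N. if k*q + r \<le> k*N then F (k*q + r) else 0)"
proof -
  define S where "S = {(r, q). r < k \<and> q \<le> N \<and> k*q + r \<le> k*N}"
  have inj: "inj_on (\<lambda>(r, q). k*q + r) S"
  proof (rule inj_onI, clarsimp simp: S_def)
    fix r q r' q' assume "r < k" "r' < k" "k*q + r = k*q' + r'"
    then have "(k*q + r) div k = (k*q' + r') div k" "(k*q + r) mod k = (k*q' + r') mod k"
      by simp_all
    then show "r = r' \<and> q = q'" using \<open>r < k\<close> \<open>r' < k\<close> by simp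
  qed
  have "(\<lambda>(r, q). k*q + r) ` S = {..k*N}"
  proof (intro equalityI subsetI)
    fix j assume j: "j \<in> {..k*N}"
    then have "j div k \<le> N"
      using div_le_mono[of j "k*N" k] assms by simp
    then have "(j mod k, j div k) \<in> S" using j assms by (auto simp: S_def)
    then show "j \<in> (\<lambda>(r, q). k*q + r) ` S" by (rule rev_image_eqI) simp
  qed (auto simp: S_def)
  then have "(\<Sum>j\<le>k*N. F j) = (\<Sum>(r, q)\<in>S. F (k*q + r))"
    using sum.reindex[OF inj, of F] by (simp add: case_prod_beta comp_def)
  also have "\<dots> = (\<Sum>(r, q)\<in>{..<k} \<times> {..N}. if k*q + r \<le> k*N then F (k*q + r) else 0)"
    by (rule sum.mono_neutral_cong_left) (auto simp: S_def split: if_splits)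
  also have "\<dots> = (\<Sum>r<k. \<Sum>q\<le>N. if k*q + r \<le> k*N then F (k*q + r) else 0)"
    by (simp add: sum.cartesian_product)
  finally show ?thesis .
qed

definition residue_subvector :: "nat \<Rightarrow> nat \<Rightarrow> (nat \<Rightarrow> complex) \<Rightarrow> nat \<Rightarrow> nat \<Rightarrow> complex" where
  "residue_subvector k N v r p = (if k*p + r \<le> k*N then v (k*p + r) else 0)"

lemma sqnorm_eq_sum_residue_subvectors:
  assumes "k > 0"
  shows "sqnorm (k*N) v = (\<Sum>r<k. sqnorm N (residue_subvector k N v r))"
  unfolding sqnorm_def sum_atMost_mult_by_residue[OF assms] residue_subvector_def
  by (intro sum.cong refl) auto

lemma toeplitz_mult_dilate_symbol:
  assumes "r < k"
  shows "toeplitz_mult (k*N) (dilate_symbol k a) v (k*q + r)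
       = toeplitz_mult N a (residue_subvector k N v r) q"
proof -
  have "toeplitz_mult (k*N) (dilate_symbol k a) v (k*q + r)
      = (\<Sum>s<k. \<Sum>p\<le>N. if k*p + s \<le> k*N
           then dilate_symbol k a (int (k*q + r) - int (k*p + s)) * v (k*p + s) else 0)"
    unfolding toeplitz_mult_def using assms by (intro sum_atMost_mult_by_residue) simp
  also have "\<dots> = (\<Sum>s<k. if s = r then toeplitz_mult N a (residue_subvector k N v r) q else 0)"
  proof (intro sum.cong refl)
    fix s assume "s \<in> {..<k}"
    show "(\<Sum>p\<le>N. if k*p + s \<le> k*N
           then dilate_symbol k a (int (k*q + r) - int (k*p + s)) * v (k*p + s) else 0)
        = (if s = r then toeplitz_mult N a (residue_subvector k N v r) q else 0)"
    proof (cases "s = r")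
      case True
      have dil: "dilate_symbol k a (int (k*q + r) - int (k*p + r)) = a (int q - int p)" for p
        using dilate_symbol_residues[OF assms assms] by simp
      have "(\<Sum>p\<le>N. if k*p + s \<le> k*N
           then dilate_symbol k a (int (k*q + r) - int (k*p + s)) * v (k*p + s) else 0)
          = (\<Sum>p\<le>N. a (int q - int p) * residue_subvector k N v r p)"
        by (intro sum.cong refl) (unfold True dil, simp add: residue_subvector_def)
      then show ?thesis
        using True by (simp add: toeplitz_mult_def)
    next
      case False
      have dil: "dilate_symbol k a (int (k*q + r) - int (k*p + s)) = 0" for p
        using dilate_symbol_residues[OF assms, where s=s and a=a and q=q and p=p] \<open>s \<in> {..<k}\<close> False
        by simp
      show ?thesis
        unfolding dil mult_zero_left if_cancel using False by simp
    qed
  qed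
  also have "\<dots> = toeplitz_mult N a (residue_subvector k N v r) q"
    using assms by simp
  finally show ?thesis .
qed

lemma toeplitz_opnorm_dilate_symbol_le:
  assumes k: "k > 0"
  shows "toeplitz_opnorm (k*N) (dilate_symbol k a) \<le> toeplitz_opnorm N a"
  unfolding toeplitz_opnorm_eq[of "k*N"]
proof (rule cSup_least)
  have "sqnorm (k*N) (\<lambda>_. 0) \<le> 1" by (simp add: sqnorm_def)
  then show "{sqrt (sqnorm (k*N) (toeplitz_mult (k*N) (dilate_symbol k a) v)) | v. sqnorm (k*N) v \<le> 1} \<noteq> {}"
    by blast
next
  fix x assume "x \<in> {sqrt (sqnorm (k*N) (toeplitz_mult (k*N) (dilate_symbol k a) v)) | v. sqnorm (k*N) v \<le> 1}"
  then obtain v where x: "x = sqrt (sqnorm (k*N) (toeplitz_mult (k*N) (dilate_symbol k a) v))"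
    and v: "sqnorm (k*N) v \<le> 1" by blast
  let ?A = "toeplitz_opnorm N a" and ?w = "residue_subvector k N v"
  have "sqnorm N (residue_subvector k N (toeplitz_mult (k*N) (dilate_symbol k a) v) r)
      \<le> sqnorm N (toeplitz_mult N a (?w r))" if "r < k" for r
    unfolding sqnorm_def residue_subvector_def toeplitz_mult_dilate_symbol[OF that]
    by (intro sum_mono) simp
  then have "sqnorm (k*N) (toeplitz_mult (k*N) (dilate_symbol k a) v)
      \<le> (\<Sum>r<k. sqnorm N (toeplitz_mult N a (?w r)))"
    unfolding sqnorm_eq_sum_residue_subvectors[OF k] by (intro sum_mono) simp
  also have "\<dots> \<le> (\<Sum>r<k. ?A\<^sup>2 * sqnorm N (?w r))"
    by (intro sum_mono sqnorm_toeplitz_mult_le)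
  also have "\<dots> = ?A\<^sup>2 * sqnorm (k*N) v"
    by (simp add: sqnorm_eq_sum_residue_subvectors[OF k] sum_distrib_left)
  also have "\<dots> \<le> ?A\<^sup>2"
    using v by (simp add: mult_left_le)
  finally show "x \<le> ?A"
    unfolding x using toeplitz_opnorm_nonneg[of N a] real_le_lsqrt by blast
qed

lemma selfadj_toeplitz_dilate_symbol:
  assumes "selfadj_toeplitz N a" "k > 0"
  shows "selfadj_toeplitz (k*N) (dilate_symbol k a)"
  unfolding selfadj_toeplitz_def
proof (intro allI impI)
  fix n :: int assume n: "\<bar>n\<bar> \<le> int (k*N)"
  show "dilate_symbol k a (- n) = cnj (dilate_symbol k a n)"
  proof (cases "int k dvd n")
    case True
    then obtain m where m: "n = int k * m" by blast
    with n assms(2) have "\<bar>m\<bar> \<le> int N"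
      by (simp add: abs_mult)
    then have "a (- m) = cnj (a m)" using assms(1) by (simp add: selfadj_toeplitz_def)
    then show ?thesis
      using assms(2) by (simp add: m flip: mult_minus_right)
  qed (simp add: dilate_symbol_def)
qed

lemma toeplitz_nonzero_dilate_symbol:
  assumes "toeplitz_nonzero N a" "k > 0"
  shows "toeplitz_nonzero (k*N) (dilate_symbol k a)"
proof -
  obtain n where n: "\<bar>n\<bar> \<le> int N" "a n \<noteq> 0"
    using assms(1) by (auto simp: toeplitz_nonzero_def)
  then have "\<bar>int k * n\<bar> \<le> int (k*N)"
    by (simp add: abs_mult mult_left_mono)
  with n assms(2) show ?thesis
    by (auto simp: toeplitz_nonzero_def intro!: exI[of _ "int k * n"])
qed

lemma Linf_norm_nonneg: "Linf_norm f \<ge> 0"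
proof (cases "(\<lambda>\<theta>. ereal (cmod (f \<theta>))) \<in> borel_measurable circ_measure")
  case True
  have "emeasure circ_measure (space circ_measure) \<noteq> 0"
    by (simp add: emeasure_restrict_space)
  then have "0 = esssup circ_measure (\<lambda>_. ereal 0)"
    by (simp add: esssup_const)
  also have "\<dots> \<le> Linf_norm f"
    unfolding Linf_norm_def by (rule esssup_mono) auto
  finally show ?thesis .
next
  case False
  then show ?thesis by (simp add: Linf_norm_def esssup_non_measurable)
qed

lemma Linf_normD:
  assumes "f \<in> Linf"
  obtains B where "Linf_norm f = ereal B" "AE \<theta> in circ_measure. cmod (f \<theta>) \<le> B"
proof -
  have "Linf_norm f \<noteq> \<infinity>" "Linf_norm f \<noteq> - \<infinity>"
    using assms Linf_norm_nonneg[of f] by (auto simp: Linf_def)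
  then obtain B where B: "Linf_norm f = ereal B"
    by (cases "Linf_norm f") auto
  have "AE \<theta> in circ_measure. ereal (cmod (f \<theta>)) \<le> Linf_norm f"
    unfolding Linf_norm_def by (rule esssup_AE)
  then show ?thesis
    using that[OF B] B by simp
qed

lemma Linf_normI:
  assumes "f \<in> borel_measurable circ_measure" "AE \<theta> in circ_measure. cmod (f \<theta>) \<le> B"
  shows "f \<in> Linf" "Linf_norm f \<le> ereal B"
proof -
  show "Linf_norm f \<le> ereal B"
    unfolding Linf_norm_def using assms by (intro esssup_I) auto
  then show "f \<in> Linf"
    using assms(1) by (auto simp: Linf_def)
qed

lemma AE_lebesgue_on_affine:
  fixes S T :: "real set"
  assumes ae: "AE x in lebesgue_on S. P x" and c: "c \<noteq> 0"
    and maps: "\<And>\<theta>. \<theta> \<in> T \<Longrightarrow> t + c*\<theta> \<in> S"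
    and S: "S \<in> sets lebesgue" and T: "T \<in> sets lebesgue"
  shows "AE \<theta> in lebesgue_on T. P (t + c*\<theta>)"
proof -
  obtain N where N: "N \<in> null_sets (lebesgue_on S)" "{x \<in> space (lebesgue_on S). \<not> P x} \<subseteq> N"
    using ae by (auto simp: eventually_ae_filter)
  then have "negligible N"
    using null_sets_restrict_space[OF S] by (auto simp: negligible_iff_null_sets)
  moreover have "(\<lambda>x. (x - t) / c) differentiable_on N"
    unfolding differentiable_on_def differentiable_def
    by (rule c derivative_eq_intros strip exI | simp)+
  ultimately have "negligible ((\<lambda>x. (x - t) / c) ` N)"
    by (intro negligible_differentiable_image_negligible) auto
  then have "negligible ((\<lambda>x. (x - t) / c) ` N \<inter> T)"
    by (rule negligible_subset) auto
  then have "(\<lambda>x. (x - t) / c) ` N \<inter> T \<in> null_sets (lebesgue_on T)"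
    using null_sets_restrict_space[OF T] by (simp add: negligible_iff_null_sets)
  moreover have "{\<theta> \<in> space (lebesgue_on T). \<not> P (t + c*\<theta>)} \<subseteq> (\<lambda>x. (x - t) / c) ` N \<inter> T"
  proof safe
    fix \<theta> assume "\<theta> \<in> space (lebesgue_on T)" "\<not> P (t + c*\<theta>)"
    then have "t + c*\<theta> \<in> N" using N(2) maps by auto
    moreover have "\<theta> = ((t + c*\<theta>) - t) / c" using c by simp
    ultimately show "\<theta> \<in> (\<lambda>x. (x - t) / c) ` N" by blast
  qed auto
  ultimately show ?thesis by (rule AE_I')
qed

lemma measurable_lebesgue_on_affine:
  fixes S T :: "real set" and g :: "real \<Rightarrow> complex"
  assumes g: "g \<in> borel_measurable (lebesgue_on S)" and c: "c \<noteq> 0"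
    and maps: "\<And>\<theta>. \<theta> \<in> T \<Longrightarrow> t + c*\<theta> \<in> S" and S: "S \<in> sets lebesgue"
  shows "(\<lambda>\<theta>. g (t + c*\<theta>)) \<in> borel_measurable (lebesgue_on T)"
proof -
  define g0 where "g0 x = (if x \<in> S then g x else 0)" for x
  have "g0 \<in> borel_measurable lebesgue"
    unfolding g0_def by (rule borel_measurable_if_I[OF g S])
  then have "(\<lambda>x. g0 (t + c *\<^sub>R x)) \<in> borel_measurable (lebesgue_on T)"
    by (intro measurable_restrict_space1 borel_measurable_affine[OF _ c])
  moreover have "g0 (t + c *\<^sub>R x) = g (t + c*x)" if "x \<in> space (lebesgue_on T)" for x
    using maps[of x] that by (simp add: g0_def)
  ultimately show ?thesis
    using measurable_cong[of "lebesgue_on T" "\<lambda>x. g0 (t + c *\<^sub>R x)" "\<lambda>\<theta>. g (t + c*\<theta>)"]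
    by simp
qed

lemma Linf_compose_affine:
  assumes g: "g \<in> Linf" and c: "c \<noteq> 0"
    and maps: "\<And>\<theta>. \<theta> \<in> {0..2*pi} \<Longrightarrow> t + c*\<theta> \<in> {0..2*pi}"
  shows "(\<lambda>\<theta>. g (t + c*\<theta>)) \<in> Linf" "Linf_norm (\<lambda>\<theta>. g (t + c*\<theta>)) \<le> Linf_norm g"
proof -
  obtain B where B: "Linf_norm g = ereal B" "AE x in circ_measure. cmod (g x) \<le> B"
    using Linf_normD[OF g] by blast
  have "(\<lambda>\<theta>. g (t + c*\<theta>)) \<in> borel_measurable circ_measure"
    using g by (intro measurable_lebesgue_on_affine[OF _ c maps]) (auto simp: Linf_def)
  moreover have "AE \<theta> in circ_measure. cmod (g (t + c*\<theta>)) \<le> B"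
    using maps by (intro AE_lebesgue_on_affine[OF B(2) c]) auto
  ultimately show "(\<lambda>\<theta>. g (t + c*\<theta>)) \<in> Linf" "Linf_norm (\<lambda>\<theta>. g (t + c*\<theta>)) \<le> Linf_norm g"
    using Linf_normI B(1) by auto
qed

lemma Linf_average:
  assumes J: "finite J" "J \<noteq> {}"
    and f: "\<And>j. j \<in> J \<Longrightarrow> f j \<in> Linf" "\<And>j. j \<in> J \<Longrightarrow> Linf_norm (f j) \<le> ereal B"
  shows "(\<lambda>\<theta>. (\<Sum>j\<in>J. f j \<theta>) / of_nat (card J)) \<in> Linf"
    "Linf_norm (\<lambda>\<theta>. (\<Sum>j\<in>J. f j \<theta>) / of_nat (card J)) \<le> ereal B"
proof -
  have "AE \<theta> in circ_measure. \<forall>j\<in>J. cmod (f j \<theta>) \<le> B"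
  proof (rule AE_finite_allI[OF J(1)])
    fix j assume "j \<in> J"
    have "AE \<theta> in circ_measure. ereal (cmod (f j \<theta>)) \<le> Linf_norm (f j)"
      unfolding Linf_norm_def by (rule esssup_AE)
    moreover note f(2)[OF \<open>j \<in> J\<close>]
    ultimately show "AE \<theta> in circ_measure. cmod (f j \<theta>) \<le> B"
      by (elim eventually_mono) (metis ereal_less_eq(3) order_trans)
  qed
  then have "AE \<theta> in circ_measure. cmod ((\<Sum>j\<in>J. f j \<theta>) / of_nat (card J)) \<le> B"
  proof eventually_elim
    case (elim \<theta>)
    have "cmod ((\<Sum>j\<in>J. f j \<theta>) / of_nat (card J)) \<le> (\<Sum>j\<in>J. cmod (f j \<theta>)) / card J"
      by (simp add: norm_divide divide_right_mono norm_sum)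
    also have "\<dots> \<le> (\<Sum>j\<in>J. B) / card J"
      using elim by (intro divide_right_mono sum_mono) auto
    also have "\<dots> = B"
      using J by simp
    finally show ?case .
  qed
  moreover have "f j \<in> borel_measurable circ_measure" if "j \<in> J" for j
    using f(1)[OF that] by (simp add: Linf_def)
  then have "(\<lambda>\<theta>. (\<Sum>j\<in>J. f j \<theta>) / of_nat (card J)) \<in> borel_measurable circ_measure"
    by (intro borel_measurable_divide borel_measurable_sum borel_measurable_const)
  ultimately show "(\<lambda>\<theta>. (\<Sum>j\<in>J. f j \<theta>) / of_nat (card J)) \<in> Linf"
    "Linf_norm (\<lambda>\<theta>. (\<Sum>j\<in>J. f j \<theta>) / of_nat (card J)) \<le> ereal B"
    using Linf_normI by blast+
qed

lemma Linf_integrable: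
  assumes "f \<in> Linf"
  shows "integrable circ_measure (\<lambda>\<theta>. f \<theta> * exp (- (\<i> * of_int n * of_real \<theta>)))"
proof -
  obtain B where B: "AE x in circ_measure. cmod (f x) \<le> B"
    using Linf_normD[OF assms] by blast
  have "(\<lambda>\<theta>::real. exp (- (\<i> * of_int n * of_real \<theta>))) \<in> borel_measurable circ_measure"
    by (intro continuous_imp_measurable_on_sets_lebesgue continuous_intros) simp
  moreover have "f \<in> borel_measurable circ_measure"
    using assms by (simp add: Linf_def)
  ultimately have "(\<lambda>\<theta>. f \<theta> * exp (- (\<i> * of_int n * of_real \<theta>))) \<in> borel_measurable circ_measure"
    by measurable
  moreover have "AE \<theta> in circ_measure. norm (f \<theta> * exp (- (\<i> * of_int n * of_real \<theta>))) \<le> B"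
    using B by eventually_elim (simp add: norm_mult)
  ultimately show ?thesis
    by (intro finite_measure.integrable_const_bound[OF finite_measure_lebesgue_on, where B=B]) simp_all
qed

lemma Linf_integrable_on:
  assumes "f \<in> Linf"
  shows "(\<lambda>\<theta>. f \<theta> * exp (- (\<i> * of_int n * of_real \<theta>))) integrable_on {0..2*pi}"
  using has_integral_integral_lebesgue_on[OF Linf_integrable[OF assms]]
  by (auto simp: integrable_on_def)

lemma fourier_coeff_eq_integral:
  assumes "f \<in> Linf"
  shows "fourier_coeff f n
       = (1 / (2*pi)) * integral {0..2*pi} (\<lambda>\<theta>. f \<theta> * exp (- (\<i> * of_int n * of_real \<theta>)))"
  unfolding fourier_coeff_def
  by (subst lebesgue_integral_eq_integral[OF Linf_integrable[OF assms]]) simp_all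

lemma integral_consecutive_intervals:
  fixes F :: "real \<Rightarrow> 'a::banach"
  assumes t: "mono t" and F: "F integrable_on {t 0..t m}"
  shows "(\<Sum>j<m. integral {t j..t (Suc j)} F) = integral {t 0..t m} F"
  using F
proof (induction m)
  case 0
  show ?case
    by (simp add: integral_unique[OF has_integral_null_real])
next
  case (Suc m)
  have le: "t 0 \<le> t m" "t m \<le> t (Suc m)"
    using t by (auto intro: monoD)
  then have "{t 0..t m} \<subseteq> {t 0..t (Suc m)}"
    by auto
  then have "F integrable_on {t 0..t m}"
    by (rule integrable_on_subinterval[OF Suc.prems])
  with le Suc show ?case
    by (simp add: Henstock_Kurzweil_Integration.integral_combine)
qed

text \<open>In the variable \<open>z = exp (\<i> \<theta>)\<close>, \<open>root_average k g\<close> is the mean of \<open>g\<close> over the \<open>k\<close>-th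
  roots of \<open>z\<close>, whose angles are \<open>root_angle k j + \<theta> / k\<close>.\<close>

definition root_angle :: "nat \<Rightarrow> nat \<Rightarrow> real" where
  "root_angle k j = 2*pi*real j / real k"

definition root_average :: "nat \<Rightarrow> (real \<Rightarrow> complex) \<Rightarrow> real \<Rightarrow> complex" where
  "root_average k g \<theta> = (\<Sum>j<k. g (root_angle k j + (1/real k)*\<theta>)) / of_nat k"

lemma root_angle_0 [simp]: "root_angle k 0 = 0"
  by (simp add: root_angle_def)

lemma root_angle_self [simp]: "k > 0 \<Longrightarrow> root_angle k k = 2*pi"
  by (simp add: root_angle_def)

lemma mono_root_angle: "mono (root_angle k)"
  unfolding root_angle_def by (intro monoI divide_right_mono mult_left_mono) auto

lemma root_angle_le_2pi:
  assumes "j \<le> k"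
  shows "root_angle k j \<le> 2*pi"
proof -
  have "real j / real k \<le> 1"
    using assms by (cases "k = 0") (auto simp: divide_le_eq_1)
  then have "2*pi * (real j / real k) \<le> 2*pi"
    by (intro mult_left_le) simp_all
  then show ?thesis
    by (simp add: root_angle_def)
qed

lemma root_angle_affine_maps:
  assumes j: "j < k" and \<theta>: "\<theta> \<in> {0..2*pi}"
  shows "root_angle k j + (1/real k)*\<theta> \<in> {0..2*pi}"
proof -
  have "root_angle k j + (1/real k)*\<theta> \<le> root_angle k j + (1/real k)*(2*pi)"
    using \<theta> by (intro add_left_mono mult_left_mono) auto
  also have "\<dots> = root_angle k (Suc j)"
    by (simp add: root_angle_def add_divide_distrib algebra_simps)
  also have "\<dots> \<le> 2*pi"
    using j by (intro root_angle_le_2pi) simp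
  finally show ?thesis
    using \<theta> by (simp add: root_angle_def)
qed

lemma Linf_root_shift:
  assumes g: "g \<in> Linf" and j: "j < k"
  shows "(\<lambda>\<theta>. g (root_angle k j + (1/real k)*\<theta>)) \<in> Linf"
    "Linf_norm (\<lambda>\<theta>. g (root_angle k j + (1/real k)*\<theta>)) \<le> Linf_norm g"
proof -
  have c: "1 / real k \<noteq> 0"
    using j by simp
  from Linf_compose_affine[OF g c root_angle_affine_maps[OF j]] show "(\<lambda>\<theta>. g (root_angle k j + (1/real k)*\<theta>)) \<in> Linf"
    "Linf_norm (\<lambda>\<theta>. g (root_angle k j + (1/real k)*\<theta>)) \<le> Linf_norm g"
    by simp_all
qed

lemma Linf_root_average:
  assumes g: "g \<in> Linf" and k: "k > 0"
  shows "root_average k g \<in> Linf" "Linf_norm (root_average k g) \<le> Linf_norm g"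
proof -
  obtain B where B: "Linf_norm g = ereal B"
    using Linf_normD[OF g] by blast
  have eq: "root_average k g
      = (\<lambda>\<theta>. (\<Sum>j\<in>{..<k}. g (root_angle k j + (1/real k)*\<theta>)) / of_nat (card {..<k}))"
    by (simp add: root_average_def fun_eq_iff)
  show "root_average k g \<in> Linf"
    unfolding eq by (rule Linf_average(1)) (use k Linf_root_shift[OF g] B in auto)
  show "Linf_norm (root_average k g) \<le> Linf_norm g"
    unfolding eq B by (rule Linf_average(2)) (use k Linf_root_shift[OF g] B in auto)
qed

lemma exp_freq_mult_root_angle:
  assumes k: "k > 0"
  shows "exp (- (\<i> * of_int (int k * n) * of_real ((1/real k) *\<^sub>R x + root_angle k j)))
       = exp (- (\<i> * of_int n * of_real x))"
proof -
  have "- (\<i> * of_int (int k * n) * of_real ((1/real k) *\<^sub>R x + root_angle k j))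
      = - (\<i> * of_int n * of_real x) + (2 * of_int (- n * int j) * pi) * \<i>"
    using k by (simp add: root_angle_def field_simps)
  then show ?thesis
    by (simp only: exp_add exp_integer_2pi[of "- n * int j"] Ints_of_int mult_1_right)
qed

lemma integral_arc_rescale:
  assumes g: "g \<in> Linf" and k: "k > 0" and j: "j < k"
  shows "integral {0..2*pi}
           (\<lambda>\<theta>. g (root_angle k j + (1/real k)*\<theta>) * exp (- (\<i> * of_int n * of_real \<theta>)))
       = of_nat k * integral {root_angle k j..root_angle k (Suc j)}
                      (\<lambda>x. g x * exp (- (\<i> * of_int (int k * n) * of_real x)))"
proof -
  define F where "F = (\<lambda>x. g x * exp (- (\<i> * of_int (int k * n) * of_real x)))"
  define I where "I = integral {root_angle k j..root_angle k (Suc j)} F"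
  have "0 \<le> root_angle k j"
    by (simp add: root_angle_def)
  moreover have "root_angle k (Suc j) \<le> 2*pi"
    using j by (intro root_angle_le_2pi) simp
  ultimately have "{root_angle k j..root_angle k (Suc j)} \<subseteq> {0..2*pi}"
    by auto
  then have "F integrable_on {root_angle k j..root_angle k (Suc j)}"
    unfolding F_def by (rule integrable_on_subinterval[OF Linf_integrable_on[OF g]])
  then have "(F has_integral I) (cbox (root_angle k j) (root_angle k (Suc j)))"
    by (simp add: I_def has_integral_integral)
  from has_integral_affinity'[OF this, of "1/real k" "root_angle k j"] k
  have "((\<lambda>x. F ((1/real k) *\<^sub>R x + root_angle k j)) has_integral (of_nat k * I)) {0..2*pi}"
    by (simp add: root_angle_def field_simps scaleR_conv_of_real)
  moreover have "F ((1/real k) *\<^sub>R x + root_angle k j)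
      = g (root_angle k j + (1/real k)*x) * exp (- (\<i> * of_int n * of_real x))" for x
    unfolding F_def using exp_freq_mult_root_angle[OF k, of n x j] by (simp add: add.commute)
  ultimately show ?thesis
    unfolding I_def F_def by (simp add: integral_unique)
qed

lemma fourier_coeff_root_average:
  assumes g: "g \<in> Linf" and k: "k > 0"
  shows "fourier_coeff (root_average k g) n = fourier_coeff g (int k * n)"
proof -
  let ?E = "\<lambda>m \<theta>. exp (- (\<i> * of_int m * of_real (\<theta>::real)))"
  let ?g = "\<lambda>j \<theta>. g (root_angle k j + (1/real k)*\<theta>)"
  have "?g j \<in> Linf" if "j < k" for j
    using Linf_root_shift(1)[OF g that] .
  then have int: "(\<lambda>\<theta>. ?g j \<theta> * ?E n \<theta>) integrable_on {0..2*pi}" if "j \<in> {..<k}" for j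
    using Linf_integrable_on that by blast
  have "(\<lambda>\<theta>. root_average k g \<theta> * ?E n \<theta>) = (\<lambda>\<theta>. (\<Sum>j<k. ?g j \<theta> * ?E n \<theta>) / of_nat k)"
    by (simp add: fun_eq_iff root_average_def sum_distrib_right)
  moreover have "integral {0..2*pi} (\<lambda>\<theta>. \<Sum>j<k. ?g j \<theta> * ?E n \<theta>)
      = (\<Sum>j<k. integral {0..2*pi} (\<lambda>\<theta>. ?g j \<theta> * ?E n \<theta>))"
    using Henstock_Kurzweil_Integration.integral_sum[of "{..<k}" "\<lambda>j \<theta>. ?g j \<theta> * ?E n \<theta>"] int
    by blast
  ultimately have "integral {0..2*pi} (\<lambda>\<theta>. root_average k g \<theta> * ?E n \<theta>)
      = (\<Sum>j<k. integral {0..2*pi} (\<lambda>\<theta>. ?g j \<theta> * ?E n \<theta>)) / of_nat k"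
    by (simp only: Henstock_Kurzweil_Integration.integral_divide)
  also have "\<dots> = (\<Sum>j<k. of_nat k * integral {root_angle k j..root_angle k (Suc j)}
                                       (\<lambda>x. g x * ?E (int k * n) x)) / of_nat k"
    by (intro arg_cong2[where f="(/)"] sum.cong refl) (rule integral_arc_rescale[OF g k], simp)
  also have "\<dots> = (\<Sum>j<k. integral {root_angle k j..root_angle k (Suc j)}
                              (\<lambda>x. g x * ?E (int k * n) x))"
    using k by (simp flip: sum_distrib_left)
  also have "\<dots> = integral {root_angle k 0..root_angle k k} (\<lambda>x. g x * ?E (int k * n) x)"
    by (rule integral_consecutive_intervals[OF mono_root_angle])
       (use Linf_integrable_on[OF g, of "int k * n"] k in simp)
  also have "\<dots> = integral {0..2*pi} (\<lambda>x. g x * ?E (int k * n) x)"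
    using k by simp
  finally show ?thesis
    using Linf_root_average(1)[OF g k] g by (simp add: fourier_coeff_eq_integral)
qed

lemma c_A_nonneg: "c_A M a \<ge> 0"
  unfolding c_A_def by (intro INF_greatest Linf_norm_nonneg)

lemma c_A_le_c_A_dilate_symbol:
  assumes k: "k > 0"
  shows "c_A N a \<le> c_A (k*N) (dilate_symbol k a)"
  unfolding c_A_def
proof (rule INF_greatest)
  fix g assume g: "g \<in> G_set (k*N) (dilate_symbol k a)"
  then have g_Linf: "g \<in> Linf"
    by (simp add: G_set_def)
  have "fourier_coeff (root_average k g) n = a n" if n: "\<bar>n\<bar> \<le> int N" for n
  proof -
    have "\<bar>int k * n\<bar> \<le> int (k*N)"
      using n by (simp add: abs_mult mult_left_mono)
    with g have "fourier_coeff g (int k * n) = a n"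
      using k by (simp add: G_set_def)
    then show ?thesis
      by (simp add: fourier_coeff_root_average[OF g_Linf k])
  qed
  then have "root_average k g \<in> G_set N a"
    using Linf_root_average(1)[OF g_Linf k] by (simp add: G_set_def)
  then show "(INF f\<in>G_set N a. Linf_norm f) \<le> Linf_norm g"
    by (rule INF_lower2) (rule Linf_root_average(2)[OF g_Linf k])
qed

lemma ereal_divide_le_divide:
  fixes x x' :: ereal and p p' :: real
  assumes "0 \<le> x" "x \<le> x'" "0 \<le> p'" "p' \<le> p"
  shows "x / ereal p \<le> x' / ereal p'"
proof (cases "p' = 0")
  case True
  \<comment> \<open>\<open>x' / 0\<close> is \<open>\<infinity>\<close> for \<open>x' > 0\<close> and \<open>0\<close> for \<open>x' = 0\<close>\<close>
  then show ?thesis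
    using assms by (cases "x' = 0") (simp_all add: divide_ereal_def)
next
  case False
  with assms have "p' > 0" "p > 0"
    by simp_all
  then have "x * ereal (1/p) \<le> x' * ereal (1/p')"
    using assms by (intro ereal_mult_mono) (auto simp: frac_le)
  then show ?thesis
    using \<open>p' > 0\<close> \<open>p > 0\<close> by (simp add: divide_ereal_def inverse_eq_divide)
qed

theorem corollary7p2:
  fixes N k :: nat
  assumes "N > 0" and "k > 0"
  shows "c_const (k * N) \<ge> c_const N"
  unfolding c_const_def
proof (rule SUP_least)
  fix a assume "a \<in> {a. selfadj_toeplitz N a \<and> toeplitz_nonzero N a}"
  then have dilated: "dilate_symbol k a \<in> {a. selfadj_toeplitz (k*N) a \<and> toeplitz_nonzero (k*N) a}"
    using selfadj_toeplitz_dilate_symbol toeplitz_nonzero_dilate_symbol assms(2) by auto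
  have "c_A N a / ereal (toeplitz_opnorm N a)
      \<le> c_A (k*N) (dilate_symbol k a) / ereal (toeplitz_opnorm (k*N) (dilate_symbol k a))"
    by (intro ereal_divide_le_divide c_A_nonneg c_A_le_c_A_dilate_symbol toeplitz_opnorm_nonneg
        toeplitz_opnorm_dilate_symbol_le assms(2))
  then show "c_A N a / ereal (toeplitz_opnorm N a)
     \<le> (SUP a\<in>{a. selfadj_toeplitz (k*N) a \<and> toeplitz_nonzero (k*N) a}.
          c_A (k*N) a / ereal (toeplitz_opnorm (k*N) a))"
    by (rule SUP_upper2[OF dilated])
qed

end
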